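(* Let $\{X(s)\}_{s\ge 0}$ be a centered Gaussian process with continuous sample paths whose covariance kernel $R(s,t)=\mathbb{E}[X(s)X(t)]$ satisfies: there exists $\rho>0$ such that $R(cs,ct)=c^{2\rho}R(s,t)$ for all $c>0$ and $s,t>0$. Suppose moreover that for all sufficiently large $\alpha>1$, setting $t_n=\alpha^n$ and $\gamma_n=\mathrm{Var}(X(t_{n+1})-X(t_n))$, one has \[ \mathbb{P}\Big(X(t_{n+1})-X(t_n)>\big(2\gamma_n\log\log t_{n+1}\big)^{1/2}\ \text{for infinitely many } n\Big)=1. \] Then, with $\sigma:=R(1,1)^{1/2}$, \[ \limsup_{s\to\infty}\frac{X(s)}{\sqrt{2s^{2\rho}\log\log s}}\ge\sigma\quad\text{almost surely}. \] *)

theory Defs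
  imports "HOL-Probability.Probability"
begin

definition centered_normal_rv :: "'a measure \<Rightarrow> ('a \<Rightarrow> real) \<Rightarrow> bool" where
  "centered_normal_rv M Y \<longleftrightarrow> Y \<in> borel_measurable M \<and>
     ((AE \<omega> in M. Y \<omega> = 0) \<or>
      (\<exists>\<sigma>>0. distributed M lborel Y (normal_density 0 \<sigma>)))"

definition centered_gaussian_process ::
    "'a measure \<Rightarrow> (real \<Rightarrow> 'a \<Rightarrow> real) \<Rightarrow> real set \<Rightarrow> bool" where
  "centered_gaussian_process M X I \<longleftrightarrow>
     (\<forall>ts cs. set ts \<subseteq> I \<longrightarrow> length cs = length ts \<longrightarrow>
        centered_normal_rv M (\<lambda>\<omega>. \<Sum>i<length ts. cs ! i * X (ts ! i) \<omega>))"

definition cov_kernel :: "'a measure \<Rightarrow> (real \<Rightarrow> 'a \<Rightarrow> real) \<Rightarrow> real \<Rightarrow> real \<Rightarrow> real" where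
  "cov_kernel M X s t = (\<integral>\<omega>. X s \<omega> * X t \<omega> \<partial>M)"

definition rv_variance :: "'a measure \<Rightarrow> ('a \<Rightarrow> real) \<Rightarrow> real" where
  "rv_variance M Y = (\<integral>\<omega>. (Y \<omega> - (\<integral>\<omega>'. Y \<omega>' \<partial>M))\<^sup>2 \<partial>M)"

end

theory Submission
  imports Defs "HOL-Real_Asymp.Real_Asymp"
begin

text \<open>Fix \<open>\<alpha> > 1\<close>, and put \<open>t\<^sub>n = \<alpha>\<^sup>n\<close>, \<open>a = \<alpha>\<^sup>\<rho>\<close>, \<open>\<sigma>\<^sup>2 = R(1,1)\<close>, and let
  \<open>D(s) = sqrt (2 s\<^sup>2\<^sup>\<rho> log log s)\<close> be the LIL normaliser. By self-similarity \<open>X(t\<^sub>n)\<close> has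
  standard deviation \<open>\<sigma> t\<^sub>n\<^sup>\<rho>\<close>, so the Gaussian tail bound and Borel-Cantelli give
  \<open>|X(t\<^sub>n)| \<le> 2 \<sigma> t\<^sub>n\<^sup>\<rho> sqrt (log log t\<^sub>n) \<le> (sqrt 2 / a) \<sigma> D(t\<^sub>n\<^sub>+\<^sub>1)\<close> eventually.
  A weighted AM-GM bound on the covariance shows that the increment \<open>X(t\<^sub>n\<^sub>+\<^sub>1) - X(t\<^sub>n)\<close>
  has standard deviation at least \<open>\<sigma> t\<^sub>n\<^sup>\<rho> (a - 1)\<close>, so its threshold in the hypothesis is at
  least \<open>(1 - 1/a) \<sigma> D(t\<^sub>n\<^sub>+\<^sub>1)\<close>. Hence \<open>X(t\<^sub>n\<^sub>+\<^sub>1) \<ge> (1 - (1 + sqrt 2)/a) \<sigma> D(t\<^sub>n\<^sub>+\<^sub>1)\<close>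
  infinitely often, and letting \<open>\<alpha> \<rightarrow> \<infinity>\<close> yields the claim.\<close>

lemma std_normal_tail_le:
  assumes Z: "distributed M lborel Z std_normal_density" and x: "1 \<le> x"
  shows "emeasure M {\<omega>\<in>space M. x \<le> Z \<omega>} \<le> exp (- x\<^sup>2 / 2)"
proof -
  let ?F = "\<lambda>t. - exp (- t\<^sup>2 / 2) / sqrt (2 * pi)"
  have "emeasure M {\<omega>\<in>space M. x \<le> Z \<omega>} = (\<integral>\<^sup>+t\<in>{x..}. std_normal_density t \<partial>lborel)"
    using distributed_emeasure[OF Z, of "{x..}"] by (simp add: vimage_def Int_def conj_commute)
  also have "\<dots> \<le> (\<integral>\<^sup>+t. ennreal (t * std_normal_density t) * indicator {x..} t \<partial>lborel)"
    using x by (intro nn_integral_mono) (auto split: split_indicator intro!: ennreal_leI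
        simp: mult_le_cancel_right1 normal_density_nonneg[THEN leD])
  also have "\<dots> = ennreal (0 - ?F x)"
  proof (rule nn_integral_FTC_atLeast)
    show "(?F has_real_derivative t * std_normal_density t) (at t)" for t
      by (auto intro!: derivative_eq_intros simp: std_normal_density_def field_simps)
    show "(?F \<longlongrightarrow> 0) at_top"
      by real_asymp
  qed (use x in auto)
  also have "\<dots> \<le> exp (- x\<^sup>2 / 2)"
    using pi_gt3 by (intro ennreal_leI) (simp add: divide_le_eq)
  finally show ?thesis .
qed

lemma centered_normal_rv_measurable:
  "centered_normal_rv M Y \<Longrightarrow> Y \<in> borel_measurable M"
  unfolding centered_normal_rv_def by simp

lemma centered_normal_rv_cases:
  assumes "centered_normal_rv M Y"
  obtains "AE \<omega> in M. Y \<omega> = 0"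
    | \<sigma> where "0 < \<sigma>" "distributed M lborel Y (normal_density 0 \<sigma>)"
  using assms unfolding centered_normal_rv_def by blast

lemma cov_kernel_diag_nonneg: "0 \<le> cov_kernel M X t t"
  unfolding cov_kernel_def by (rule integral_nonneg_AE) simp

lemma filterlim_ln_ln_power_at_top:
  fixes \<alpha> :: real
  assumes "1 < \<alpha>"
  shows "filterlim (\<lambda>n. ln (ln (\<alpha> ^ n))) at_top sequentially"
proof -
  have "filterlim (\<lambda>n. ln \<alpha> * real n) at_top sequentially"
    using assms by (intro filterlim_tendsto_pos_mult_at_top[OF tendsto_const] filterlim_real_sequentially) simp
  then have "filterlim (\<lambda>n. ln (\<alpha> ^ n)) at_top sequentially"
    using assms by (simp add: ln_realpow mult.commute)
  then show ?thesis
    by (rule filterlim_compose[OF ln_at_top])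
qed

lemma eventually_ln_ln_power_ge_one_mono:
  fixes \<alpha> :: real
  assumes "1 < \<alpha>"
  shows "eventually (\<lambda>n. 1 \<le> ln (ln (\<alpha> ^ n)) \<and> ln (ln (\<alpha> ^ n)) \<le> ln (ln (\<alpha> ^ (n + 1)))) sequentially"
proof -
  have mono: "ln (ln (\<alpha> ^ n)) \<le> ln (ln (\<alpha> ^ (n + 1)))" if "0 < n" for n
  proof -
    have "0 < ln (\<alpha> ^ n)" "ln (\<alpha> ^ n) \<le> ln (\<alpha> ^ (n + 1))"
      using assms that by (simp_all add: ln_realpow ln_mult)
    then show ?thesis
      by simp
  qed
  have "eventually (\<lambda>n. 1 \<le> ln (ln (\<alpha> ^ n))) sequentially"
    using filterlim_ln_ln_power_at_top[OF assms] unfolding filterlim_at_top by blast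
  then show ?thesis
    using eventually_gt_at_top[of 0] by eventually_elim (use mono in auto)
qed

lemma filterlim_power_Suc_at_top:
  fixes \<alpha> :: real
  assumes "1 < \<alpha>"
  shows "filterlim (\<lambda>n. \<alpha> ^ (n + 1)) at_top sequentially"
proof -
  have "filterlim (\<lambda>n. \<alpha> ^ Suc n) at_infinity sequentially"
    using assms by (intro filterlim_compose[OF filterlim_realpow_sequentially_gt1 filterlim_Suc]) simp
  then show ?thesis
    using assms by (intro filterlim_at_infinity_imp_filterlim_at_top) auto
qed

lemma summable_exp_ln_ln_power:
  fixes \<alpha> :: real
  assumes "1 < \<alpha>"
  shows "summable (\<lambda>n. exp (- 2 * ln (ln (\<alpha> ^ n))))"
proof -
  have "eventually (\<lambda>n. exp (- 2 * ln (ln (\<alpha> ^ n))) = inverse ((ln \<alpha>)\<^sup>2) * inverse (real n ^ 2)) sequentially"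
    using eventually_gt_at_top[of 0]
  proof eventually_elim
    case (elim n)
    have "0 < ln (\<alpha> ^ n)"
      using assms elim by simp
    then have "exp (- 2 * ln (ln (\<alpha> ^ n))) = inverse ((ln (\<alpha> ^ n))\<^sup>2)"
      by (simp add: exp_minus exp_of_nat_mult[of 2, simplified])
    then show ?case
      using assms by (simp add: ln_realpow power_mult_distrib)
  qed
  moreover have "summable (\<lambda>n. inverse ((ln \<alpha>)\<^sup>2) * inverse (real n ^ 2))"
    by (intro summable_mult inverse_power_summable) simp
  ultimately show ?thesis
    by (simp add: summable_cong)
qed

lemma tendsto_mult_one_minus_divide_powr:
  fixes \<alpha> :: "nat \<Rightarrow> real"
  assumes "0 < \<rho>" and "filterlim \<alpha> at_top sequentially"
  shows "(\<lambda>k. \<sigma> * (1 - c / \<alpha> k powr \<rho>)) \<longlonglongrightarrow> \<sigma>"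
proof -
  have "(\<lambda>k. \<alpha> k powr - \<rho>) \<longlonglongrightarrow> 0"
    using assms by (intro tendsto_neg_powr) auto
  then have "(\<lambda>k. \<sigma> * (1 - c * \<alpha> k powr - \<rho>)) \<longlonglongrightarrow> \<sigma> * (1 - c * 0)"
    by (intro tendsto_intros)
  then show ?thesis
    by (simp add: powr_minus_divide)
qed

lemma le_Limsup_if_frequently_along:
  fixes f :: "'a \<Rightarrow> 'b::complete_lattice"
  assumes h: "filterlim h F G" and freq: "\<exists>\<^sub>F n in G. c \<le> f (h n)"
  shows "c \<le> Limsup F f"
  unfolding Limsup_def
proof (rule INF_greatest)
  fix P assume "P \<in> {P. eventually P F}"
  then have "eventually (\<lambda>n. P (h n)) G"
    using h by (simp add: filterlim_iff)
  from frequently_eventually_frequently[OF freq this]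
  obtain n where "c \<le> f (h n)" "P (h n)"
    by (auto dest: frequently_ex)
  then show "c \<le> Sup (f ` Collect P)"
    by (auto intro: SUP_upper2)
qed

lemma AE_le_of_tendsto:
  fixes g :: "nat \<Rightarrow> 'b::linorder_topology"
  assumes "\<And>k. AE \<omega> in M. g k \<le> F \<omega>" and "g \<longlonglongrightarrow> c"
  shows "AE \<omega> in M. c \<le> F \<omega>"
proof -
  from assms(1) have "AE \<omega> in M. \<forall>k. g k \<le> F \<omega>"
    by (simp add: AE_all_countable)
  then show ?thesis
    by eventually_elim (use assms(2) in \<open>auto intro: LIMSEQ_le_const2\<close>)
qed

definition lil_norm :: "real \<Rightarrow> real \<Rightarrow> real" where
  "lil_norm \<rho> s = sqrt (2 * s powr (2 * \<rho>) * ln (ln s))"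

lemma lil_norm_eq:
  assumes "0 < s"
  shows "lil_norm \<rho> s = sqrt 2 * s powr \<rho> * sqrt (ln (ln s))"
proof -
  have "s powr (2 * \<rho>) = (s powr \<rho>)\<^sup>2"
    using assms by (simp add: powr_power)
  then show ?thesis
    by (simp add: lil_norm_def real_sqrt_mult)
qed

context prob_space
begin

lemma centered_normal_rv_moments:
  assumes "centered_normal_rv M Y"
  shows "integrable M Y" and "expectation Y = 0" and "integrable M (\<lambda>\<omega>. (Y \<omega>)\<^sup>2)"
proof -
  have [measurable]: "Y \<in> borel_measurable M"
    using assms by (rule centered_normal_rv_measurable)
  from assms have "integrable M Y \<and> expectation Y = 0 \<and> integrable M (\<lambda>\<omega>. (Y \<omega>)\<^sup>2)"
  proof (cases rule: centered_normal_rv_cases)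
    case 1
    have "integrable M Y = integrable M (\<lambda>_. 0::real)"
      and "integrable M (\<lambda>\<omega>. (Y \<omega>)\<^sup>2) = integrable M (\<lambda>_. 0::real)"
      and "expectation Y = expectation (\<lambda>_. 0)"
      by (rule integrable_cong_AE integral_cong_AE; use 1 in auto)+
    then show ?thesis by simp
  next
    case (2 \<sigma>)
    have "integrable lborel (\<lambda>x. normal_density 0 \<sigma> x * x)"
      using 2(1) by (rule integrable_normal_moment_nz_1)
    moreover have "integrable lborel (\<lambda>x. normal_density 0 \<sigma> x * x\<^sup>2)"
      using integrable_normal_moment[where \<mu>=0 and \<sigma>=\<sigma> and k=2] 2(1) by simp
    ultimately show ?thesis
      using distributed_integrable[OF 2(2), of "\<lambda>x. x"] distributed_integrable[OF 2(2), of "\<lambda>x. x\<^sup>2"]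
        normal_distributed_expectation[OF 2] by simp
  qed
  then show "integrable M Y" "expectation Y = 0" "integrable M (\<lambda>\<omega>. (Y \<omega>)\<^sup>2)"
    by auto
qed

lemma centered_normal_rv_uminus:
  assumes "centered_normal_rv M Y"
  shows "centered_normal_rv M (\<lambda>\<omega>. - Y \<omega>)"
  using assms
proof (cases rule: centered_normal_rv_cases)
  case 1
  then show ?thesis
    using centered_normal_rv_measurable[OF assms] unfolding centered_normal_rv_def by auto
next
  case (2 \<sigma>)
  have "distributed M lborel (\<lambda>\<omega>. 0 + (-1) * Y \<omega>) (normal_density (0 + (-1) * 0) (\<bar>-1\<bar> * \<sigma>))"
    using 2 by (intro normal_density_affine) auto
  then show ?thesis
    using 2 centered_normal_rv_measurable[OF assms] unfolding centered_normal_rv_def by auto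
qed

text \<open>The inequality inside the event is strict so that the bound also holds for the degenerate
  variable \<open>Y = 0\<close>.\<close>
lemma centered_normal_rv_upper_tail:
  assumes Y: "centered_normal_rv M Y" and x: "1 \<le> x"
  shows "prob {\<omega>\<in>space M. x * sqrt (expectation (\<lambda>\<omega>. (Y \<omega>)\<^sup>2)) < Y \<omega>} \<le> exp (- x\<^sup>2 / 2)"
    (is "prob ?S \<le> _")
proof -
  have [measurable]: "Y \<in> borel_measurable M"
    using Y by (rule centered_normal_rv_measurable)
  from Y show ?thesis
  proof (cases rule: centered_normal_rv_cases)
    case 1
    have nonneg: "0 \<le> x * sqrt (expectation (\<lambda>\<omega>. (Y \<omega>)\<^sup>2))"
      using x by (simp add: integral_nonneg_AE)
    have "AE \<omega> in M. \<omega> \<notin> ?S"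
      using 1 by eventually_elim (use nonneg in auto)
    moreover have "?S \<in> events"
      by measurable
    ultimately have "prob ?S = 0"
      by (metis prob_eq_0)
    then show ?thesis
      by simp
  next
    case (2 \<sigma>)
    have "expectation (\<lambda>\<omega>. (Y \<omega>)\<^sup>2) = \<sigma>\<^sup>2"
      using normal_distributed_variance[OF 2] centered_normal_rv_moments(2)[OF Y] by simp
    with 2 have "?S \<subseteq> {\<omega>\<in>space M. x \<le> Y \<omega> / \<sigma>}"
      by (auto simp: le_divide_eq)
    then have "prob ?S \<le> prob {\<omega>\<in>space M. x \<le> Y \<omega> / \<sigma>}"
      by (intro finite_measure_mono) measurable
    also have "\<dots> \<le> exp (- x\<^sup>2 / 2)"
      using std_normal_tail_le[of M "\<lambda>\<omega>. Y \<omega> / \<sigma>", OF _ x] 2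
        normal_standard_normal_convert[of \<sigma> Y 0]
      by (simp add: emeasure_eq_measure)
    finally show ?thesis .
  qed
qed

lemma centered_normal_rv_abs_tail:
  assumes Y: "centered_normal_rv M Y" and x: "1 \<le> x"
  shows "prob {\<omega>\<in>space M. x * sqrt (expectation (\<lambda>\<omega>. (Y \<omega>)\<^sup>2)) < \<bar>Y \<omega>\<bar>} \<le> 2 * exp (- x\<^sup>2 / 2)"
proof -
  have [measurable]: "Y \<in> borel_measurable M"
    using Y by (rule centered_normal_rv_measurable)
  let ?s = "x * sqrt (expectation (\<lambda>\<omega>. (Y \<omega>)\<^sup>2))"
  have "prob {\<omega>\<in>space M. ?s < \<bar>Y \<omega>\<bar>}
      \<le> prob ({\<omega>\<in>space M. ?s < Y \<omega>} \<union> {\<omega>\<in>space M. ?s < - Y \<omega>})"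
    by (intro finite_measure_mono) (auto simp: abs_if)
  also have "\<dots> \<le> prob {\<omega>\<in>space M. ?s < Y \<omega>} + prob {\<omega>\<in>space M. ?s < - Y \<omega>}"
    by (intro measure_subadditive) measurable
  also have "\<dots> \<le> 2 * exp (- x\<^sup>2 / 2)"
    using centered_normal_rv_upper_tail[OF Y x]
      centered_normal_rv_upper_tail[OF centered_normal_rv_uminus[OF Y] x] by simp
  finally show ?thesis .
qed

lemma AE_eventually_abs_le_of_summable_tails:
  assumes Y: "\<And>n. centered_normal_rv M (Y n)"
    and x: "eventually (\<lambda>n. 1 \<le> x n) sequentially"
    and summable: "summable (\<lambda>n. exp (- (x n)\<^sup>2 / 2))"
  shows "AE \<omega> in M. eventually (\<lambda>n. \<bar>Y n \<omega>\<bar> \<le> x n * sqrt (expectation (\<lambda>\<omega>. (Y n \<omega>)\<^sup>2))) sequentially"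
proof -
  define A where "A n = {\<omega>\<in>space M. x n * sqrt (expectation (\<lambda>\<omega>. (Y n \<omega>)\<^sup>2)) < \<bar>Y n \<omega>\<bar>}" for n
  have [measurable]: "Y n \<in> borel_measurable M" for n
    using Y by (rule centered_normal_rv_measurable)
  have [measurable]: "A n \<in> events" for n
    unfolding A_def by measurable
  have "eventually (\<lambda>n. norm (prob (A n)) \<le> 2 * exp (- (x n)\<^sup>2 / 2)) sequentially"
    using x by eventually_elim (use centered_normal_rv_abs_tail[OF Y] in \<open>simp add: A_def\<close>)
  then have "summable (\<lambda>n. prob (A n))"
    using summable by (rule summable_comparison_test_ev[OF _ summable_mult])
  then have "AE \<omega> in M. eventually (\<lambda>n. \<omega> \<in> space M - A n) sequentially"
    by (intro borel_cantelli_AE1) (auto simp: less_top[symmetric])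
  then show ?thesis
    by eventually_elim (auto simp: A_def not_less elim: eventually_mono)
qed

end

locale gaussian_process = prob_space M for M :: "'a measure" +
  fixes X :: "real \<Rightarrow> 'a \<Rightarrow> real" and I :: "real set"
  assumes centered_gaussian: "centered_gaussian_process M X I"
begin

lemma centered_normal_lincomb:
  assumes "s \<in> I" "t \<in> I"
  shows "centered_normal_rv M (\<lambda>\<omega>. a * X s \<omega> + b * X t \<omega>)"
proof -
  have "set [s, t] \<subseteq> I"
    using assms by simp
  then have "\<forall>cs. length cs = length [s, t] \<longrightarrow>
      centered_normal_rv M (\<lambda>\<omega>. \<Sum>i<length [s, t]. cs ! i * X ([s, t] ! i) \<omega>)"
    using centered_gaussian unfolding centered_gaussian_process_def by blast
  from this[rule_format, of "[a, b]"] show ?thesis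
    by (simp add: numeral_2_eq_2 lessThan_Suc add.commute)
qed

lemma centered_normal_X: "t \<in> I \<Longrightarrow> centered_normal_rv M (X t)"
  using centered_normal_lincomb[of t t 1 0] by simp

lemma measurable_X [measurable]: "t \<in> I \<Longrightarrow> X t \<in> borel_measurable M"
  using centered_normal_X by (rule centered_normal_rv_measurable)

lemma integrable_X_mult_X:
  assumes "s \<in> I" "t \<in> I"
  shows "integrable M (\<lambda>\<omega>. X s \<omega> * X t \<omega>)"
proof -
  have "integrable M (\<lambda>\<omega>. ((X s \<omega> + X t \<omega>)\<^sup>2 - (X s \<omega>)\<^sup>2 - (X t \<omega>)\<^sup>2) / 2)"
    using centered_normal_rv_moments(3)[OF centered_normal_lincomb[OF assms, of 1 1]]
      centered_normal_rv_moments(3)[OF centered_normal_X] assms by simp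
  then show ?thesis
    by (simp add: power2_eq_square algebra_simps)
qed

lemma rv_variance_diff:
  assumes "s \<in> I" "t \<in> I"
  shows "rv_variance M (\<lambda>\<omega>. X t \<omega> - X s \<omega>) =
    cov_kernel M X t t - 2 * cov_kernel M X t s + cov_kernel M X s s"
proof -
  have "expectation (\<lambda>\<omega>. X t \<omega> - X s \<omega>) = 0"
    using centered_normal_rv_moments(2)[OF centered_normal_lincomb[OF assms(2,1), of 1 "-1"]] by simp
  then have "rv_variance M (\<lambda>\<omega>. X t \<omega> - X s \<omega>) =
      expectation (\<lambda>\<omega>. X t \<omega> * X t \<omega> - 2 * (X t \<omega> * X s \<omega>) + X s \<omega> * X s \<omega>)"
    unfolding rv_variance_def by (simp add: power2_eq_square algebra_simps)
  then show ?thesis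
    unfolding cov_kernel_def using integrable_X_mult_X assms by simp
qed

lemma cov_kernel_le_weighted:
  assumes "s \<in> I" "t \<in> I" "0 < l"
  shows "2 * cov_kernel M X s t \<le> l * cov_kernel M X s s + cov_kernel M X t t / l"
proof -
  have amgm: "2 * (x * y) \<le> l * (x * x) + y * y / l" for x y :: real
  proof -
    have "0 \<le> (l * x - y)\<^sup>2 / l"
      using assms by simp
    then show ?thesis
      using assms by (simp add: power2_eq_square field_simps)
  qed
  have "2 * cov_kernel M X s t = expectation (\<lambda>\<omega>. 2 * (X s \<omega> * X t \<omega>))"
    unfolding cov_kernel_def by simp
  also have "\<dots> \<le> expectation (\<lambda>\<omega>. l * (X s \<omega> * X s \<omega>) + X t \<omega> * X t \<omega> / l)"
    using assms integrable_X_mult_X by (intro integral_mono amgm) auto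
  also have "\<dots> = l * cov_kernel M X s s + cov_kernel M X t t / l"
    unfolding cov_kernel_def using assms integrable_X_mult_X by simp
  finally show ?thesis .
qed

end

locale self_similar_gaussian_process = gaussian_process M X "{0..}" for M X +
  fixes \<rho> :: real
  assumes cov_kernel_scaling: "\<And>c s t. 0 < c \<Longrightarrow> 0 < s \<Longrightarrow> 0 < t \<Longrightarrow>
    cov_kernel M X (c * s) (c * t) = c powr (2 * \<rho>) * cov_kernel M X s t"
begin

lemma cov_kernel_diag:
  assumes "0 < t"
  shows "cov_kernel M X t t = (t powr \<rho>)\<^sup>2 * cov_kernel M X 1 1"
proof -
  have "(t powr \<rho>)\<^sup>2 = t powr (2 * \<rho>)"
    using assms by (simp add: powr_power)
  then show ?thesis
    using cov_kernel_scaling[of t 1 1] assms by simp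
qed

lemma sqrt_second_moment_X:
  assumes "0 < t"
  shows "sqrt (expectation (\<lambda>\<omega>. (X t \<omega>)\<^sup>2)) = t powr \<rho> * sqrt (cov_kernel M X 1 1)"
  using cov_kernel_diag[OF assms] by (simp add: cov_kernel_def power2_eq_square real_sqrt_mult)

lemma rv_variance_increment_ge:
  assumes "0 < t" "0 < \<alpha>"
  shows "(t powr \<rho> * sqrt (cov_kernel M X 1 1) * (\<alpha> powr \<rho> - 1))\<^sup>2
    \<le> rv_variance M (\<lambda>\<omega>. X (\<alpha> * t) \<omega> - X t \<omega>)"
proof -
  define a b \<sigma>2 where "a = \<alpha> powr \<rho>" and "b = t powr \<rho>" and "\<sigma>2 = cov_kernel M X 1 1"
  have pos: "0 < a" "0 < b" "0 \<le> \<sigma>2"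
    using assms by (simp_all add: a_def b_def \<sigma>2_def cov_kernel_diag_nonneg)
  have diag: "cov_kernel M X (\<alpha> * t) (\<alpha> * t) = (a * b)\<^sup>2 * \<sigma>2" "cov_kernel M X t t = b\<^sup>2 * \<sigma>2"
    using assms cov_kernel_diag[of "\<alpha> * t"] cov_kernel_diag[of t]
    by (simp_all add: a_def b_def \<sigma>2_def powr_mult)
  have "2 * cov_kernel M X (\<alpha> * t) t \<le> cov_kernel M X (\<alpha> * t) (\<alpha> * t) / a + cov_kernel M X t t / (1 / a)"
    using assms pos cov_kernel_le_weighted[of "\<alpha> * t" t "1 / a"] by simp
  also have "\<dots> = 2 * a * b\<^sup>2 * \<sigma>2"
    using pos by (simp add: diag power2_eq_square)
  finally have "(a * b)\<^sup>2 * \<sigma>2 - 2 * a * b\<^sup>2 * \<sigma>2 + b\<^sup>2 * \<sigma>2 \<le> rv_variance M (\<lambda>\<omega>. X (\<alpha> * t) \<omega> - X t \<omega>)"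
    using assms by (simp add: rv_variance_diff diag)
  moreover have "(b * sqrt \<sigma>2 * (a - 1))\<^sup>2 = (a * b)\<^sup>2 * \<sigma>2 - 2 * a * b\<^sup>2 * \<sigma>2 + b\<^sup>2 * \<sigma>2"
    using pos by (simp add: power2_diff power2_eq_square algebra_simps)
  ultimately show ?thesis
    by (simp add: a_def b_def \<sigma>2_def)
qed

lemma AE_eventually_abs_X_power_le:
  assumes "1 < \<alpha>"
  shows "AE \<omega> in M. eventually (\<lambda>n. \<bar>X (\<alpha> ^ n) \<omega>\<bar>
    \<le> 2 * sqrt (ln (ln (\<alpha> ^ n))) * ((\<alpha> ^ n) powr \<rho> * sqrt (cov_kernel M X 1 1))) sequentially"
proof -
  define L where "L n = ln (ln (\<alpha> ^ n))" for n
  have L: "eventually (\<lambda>n. 1 \<le> L n) sequentially"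
    using filterlim_ln_ln_power_at_top[OF assms] unfolding L_def filterlim_at_top by blast
  have "summable (\<lambda>n. exp (- (2 * sqrt (L n))\<^sup>2 / 2))"
  proof (subst summable_cong)
    show "eventually (\<lambda>n. exp (- (2 * sqrt (L n))\<^sup>2 / 2) = exp (- 2 * L n)) sequentially"
      using L by eventually_elim (simp add: power_mult_distrib)
  qed (use summable_exp_ln_ln_power[OF assms] in \<open>simp add: L_def\<close>)
  moreover have "eventually (\<lambda>n. 1 \<le> 2 * sqrt (L n)) sequentially"
    using L
  proof eventually_elim
    case (elim n)
    then show ?case
      using real_sqrt_ge_one[of "L n"] by linarith
  qed
  ultimately have "AE \<omega> in M. eventually (\<lambda>n. \<bar>X (\<alpha> ^ n) \<omega>\<bar>
      \<le> 2 * sqrt (L n) * sqrt (expectation (\<lambda>\<omega>. (X (\<alpha> ^ n) \<omega>)\<^sup>2))) sequentially"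
    using assms centered_normal_X by (intro AE_eventually_abs_le_of_summable_tails) auto
  then show ?thesis
    using assms by (simp add: L_def sqrt_second_moment_X)
qed

lemma AE_eventually_abs_X_power_le_lil_norm:
  assumes \<alpha>: "1 < \<alpha>"
  shows "AE \<omega> in M. eventually (\<lambda>n. \<bar>X (\<alpha> ^ n) \<omega>\<bar>
    \<le> sqrt 2 / \<alpha> powr \<rho> * sqrt (cov_kernel M X 1 1) * lil_norm \<rho> (\<alpha> ^ (n + 1))) sequentially"
  using AE_eventually_abs_X_power_le[OF \<alpha>]
proof eventually_elim
  case (elim \<omega>)
  from elim eventually_ln_ln_power_ge_one_mono[OF \<alpha>] show ?case
  proof eventually_elim
    case (elim n)
    define b where "b = (\<alpha> ^ n) powr \<rho> * sqrt (cov_kernel M X 1 1)"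
    have "0 \<le> b"
      unfolding b_def by (simp add: cov_kernel_diag_nonneg)
    have "\<bar>X (\<alpha> ^ n) \<omega>\<bar> \<le> 2 * sqrt (ln (ln (\<alpha> ^ n))) * b"
      using elim(1) unfolding b_def .
    also have "\<dots> \<le> 2 * sqrt (ln (ln (\<alpha> ^ (n + 1)))) * b"
      using elim(2) \<open>0 \<le> b\<close> by (intro mult_right_mono) auto
    also have "\<dots> = sqrt 2 / \<alpha> powr \<rho> * sqrt (cov_kernel M X 1 1) * lil_norm \<rho> (\<alpha> ^ (n + 1))"
      using \<alpha> by (simp add: lil_norm_eq b_def powr_mult field_simps)
    finally show ?case .
  qed
qed

lemma lil_norm_le_increment_threshold:
  assumes \<alpha>: "1 < \<alpha>" and L: "0 \<le> ln (ln (\<alpha> ^ (n + 1)))"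
  shows "(1 - 1 / \<alpha> powr \<rho>) * sqrt (cov_kernel M X 1 1) * lil_norm \<rho> (\<alpha> ^ (n + 1))
    \<le> sqrt (2 * rv_variance M (\<lambda>\<omega>. X (\<alpha> ^ (n + 1)) \<omega> - X (\<alpha> ^ n) \<omega>) * ln (ln (\<alpha> ^ (n + 1))))"
proof -
  define a d where "a = \<alpha> powr \<rho>" and "d = (\<alpha> ^ n) powr \<rho> * sqrt (cov_kernel M X 1 1) * (a - 1)"
  have "(1 - 1 / a) * sqrt (cov_kernel M X 1 1) * lil_norm \<rho> (\<alpha> ^ (n + 1))
      = sqrt 2 * d * sqrt (ln (ln (\<alpha> ^ (n + 1))))"
    using \<alpha> by (simp add: lil_norm_eq a_def d_def powr_mult field_simps)
  also have "\<dots> \<le> sqrt 2 * \<bar>d\<bar> * sqrt (ln (ln (\<alpha> ^ (n + 1))))"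
    using L by (intro mult_right_mono mult_left_mono) auto
  also have "\<dots> = sqrt (2 * d\<^sup>2 * ln (ln (\<alpha> ^ (n + 1))))"
    by (simp add: real_sqrt_mult)
  also have "\<dots> \<le> sqrt (2 * rv_variance M (\<lambda>\<omega>. X (\<alpha> ^ (n + 1)) \<omega> - X (\<alpha> ^ n) \<omega>) * ln (ln (\<alpha> ^ (n + 1))))"
    using rv_variance_increment_ge[of "\<alpha> ^ n" \<alpha>] \<alpha> L
    by (intro real_sqrt_le_mono mult_right_mono) (auto simp: a_def d_def mult.commute)
  finally show ?thesis
    unfolding a_def .
qed

lemma Limsup_ge_along_geometric:
  assumes \<alpha>: "1 < \<alpha>"
    and freq: "AE \<omega> in M. \<exists>\<^sub>F n in sequentially.
      X (\<alpha> ^ (n + 1)) \<omega> - X (\<alpha> ^ n) \<omega> >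
      sqrt (2 * rv_variance M (\<lambda>\<omega>'. X (\<alpha> ^ (n + 1)) \<omega>' - X (\<alpha> ^ n) \<omega>') * ln (ln (\<alpha> ^ (n + 1))))"
  shows "AE \<omega> in M. ereal (sqrt (cov_kernel M X 1 1) * (1 - (1 + sqrt 2) / \<alpha> powr \<rho>))
    \<le> Limsup at_top (\<lambda>s. ereal (X s \<omega> / lil_norm \<rho> s))"
  using freq AE_eventually_abs_X_power_le_lil_norm[OF \<alpha>]
proof eventually_elim
  case (elim \<omega>)
  define c where "c = sqrt (cov_kernel M X 1 1) * (1 - (1 + sqrt 2) / \<alpha> powr \<rho>)"
  have "\<exists>\<^sub>F n in sequentially. c \<le> X (\<alpha> ^ (n + 1)) \<omega> / lil_norm \<rho> (\<alpha> ^ (n + 1))"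
    using frequently_eventually_frequently[OF elim(1)
        eventually_conj[OF elim(2) eventually_ln_ln_power_ge_one_mono[OF \<alpha>]]]
  proof (rule frequently_elim1)
    fix n
    assume n: "sqrt (2 * rv_variance M (\<lambda>\<omega>'. X (\<alpha> ^ (n + 1)) \<omega>' - X (\<alpha> ^ n) \<omega>') * ln (ln (\<alpha> ^ (n + 1))))
        < X (\<alpha> ^ (n + 1)) \<omega> - X (\<alpha> ^ n) \<omega> \<and>
      \<bar>X (\<alpha> ^ n) \<omega>\<bar> \<le> sqrt 2 / \<alpha> powr \<rho> * sqrt (cov_kernel M X 1 1) * lil_norm \<rho> (\<alpha> ^ (n + 1)) \<and>
      1 \<le> ln (ln (\<alpha> ^ n)) \<and> ln (ln (\<alpha> ^ n)) \<le> ln (ln (\<alpha> ^ (n + 1)))"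
    have "c * lil_norm \<rho> (\<alpha> ^ (n + 1))
        = (1 - 1 / \<alpha> powr \<rho>) * sqrt (cov_kernel M X 1 1) * lil_norm \<rho> (\<alpha> ^ (n + 1))
          - sqrt 2 / \<alpha> powr \<rho> * sqrt (cov_kernel M X 1 1) * lil_norm \<rho> (\<alpha> ^ (n + 1))"
      unfolding c_def by (simp add: algebra_simps add_divide_distrib diff_divide_distrib)
    also have "\<dots> \<le> X (\<alpha> ^ (n + 1)) \<omega>"
      using n lil_norm_le_increment_threshold[OF \<alpha>, of n] by auto
    finally show "c \<le> X (\<alpha> ^ (n + 1)) \<omega> / lil_norm \<rho> (\<alpha> ^ (n + 1))"
      using n \<alpha> by (simp add: pos_le_divide_eq lil_norm_eq)
  qed
  then show ?case
    unfolding c_def by (intro le_Limsup_if_frequently_along[OF filterlim_power_Suc_at_top[OF \<alpha>]]) simp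
qed

end

theorem proposition3p3:
  fixes M :: "'a measure" and X :: "real \<Rightarrow> 'a \<Rightarrow> real" and \<rho> :: real
  assumes "prob_space M"
    and "centered_gaussian_process M X {0..}"
    and "\<forall>\<omega>\<in>space M. continuous_on {0..} (\<lambda>s. X s \<omega>)"
    and "\<rho> > 0"
    and "\<forall>c>0. \<forall>s>0. \<forall>t>0.
           cov_kernel M X (c * s) (c * t) = c powr (2 * \<rho>) * cov_kernel M X s t"
    and "\<exists>A. \<forall>\<alpha>>A. \<alpha> > 1 \<longrightarrow>
           (AE \<omega> in M. \<exists>\<^sub>F n in sequentially.
              X (\<alpha> ^ (n + 1)) \<omega> - X (\<alpha> ^ n) \<omega> >
              sqrt (2 * rv_variance M (\<lambda>\<omega>'. X (\<alpha> ^ (n + 1)) \<omega>' - X (\<alpha> ^ n) \<omega>')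
                      * ln (ln (\<alpha> ^ (n + 1)))))"
  shows "AE \<omega> in M.
           Limsup at_top (\<lambda>s. ereal (X s \<omega> / sqrt (2 * s powr (2 * \<rho>) * ln (ln s))))
             \<ge> ereal (sqrt (cov_kernel M X 1 1))"
proof -
  have "self_similar_gaussian_process M X \<rho>"
    using assms(1,2,5)
    by (simp add: self_similar_gaussian_process_def self_similar_gaussian_process_axioms_def
        gaussian_process_def gaussian_process_axioms_def)
  then interpret self_similar_gaussian_process M X \<rho> .
  obtain A where A: "\<forall>\<alpha>>A. \<alpha> > 1 \<longrightarrow>
           (AE \<omega> in M. \<exists>\<^sub>F n in sequentially.
              X (\<alpha> ^ (n + 1)) \<omega> - X (\<alpha> ^ n) \<omega> >
              sqrt (2 * rv_variance M (\<lambda>\<omega>'. X (\<alpha> ^ (n + 1)) \<omega>' - X (\<alpha> ^ n) \<omega>')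
                      * ln (ln (\<alpha> ^ (n + 1)))))"
    using assms(6) by blast
  define \<sigma> where "\<sigma> = sqrt (cov_kernel M X 1 1)"
  define \<alpha> where "\<alpha> k = max A 1 + 1 + real k" for k :: nat
  have \<alpha>: "1 < \<alpha> k" "A < \<alpha> k" for k
    unfolding \<alpha>_def by auto
  have lim: "filterlim \<alpha> at_top sequentially"
    unfolding \<alpha>_def by (intro filterlim_tendsto_add_at_top[OF tendsto_const] filterlim_real_sequentially)
  have "AE \<omega> in M. ereal (\<sigma> * (1 - (1 + sqrt 2) / \<alpha> k powr \<rho>))
      \<le> Limsup at_top (\<lambda>s. ereal (X s \<omega> / lil_norm \<rho> s))" for k
    unfolding \<sigma>_def using A[rule_format, OF \<alpha>(2) \<alpha>(1)] by (rule Limsup_ge_along_geometric[OF \<alpha>(1)])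
  moreover have "(\<lambda>k. ereal (\<sigma> * (1 - (1 + sqrt 2) / \<alpha> k powr \<rho>))) \<longlonglongrightarrow> ereal \<sigma>"
    using assms(4) lim by (intro tendsto_ereal tendsto_mult_one_minus_divide_powr)
  ultimately show ?thesis
    unfolding \<sigma>_def lil_norm_def by (rule AE_le_of_tendsto)
qed

end
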